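(* For the unit-sum normalization, there is an absolute constant $c>0$ such that for every $n\ge1$, random priority on $n$ agents and $n$ items satisfies $ar(RP)\ge c/\sqrt n$.
   Context: Agents $N=\{1,\dots,n\}$, items $M=\{1,\dots,n\}$, outcomes are bijections $\mu$ ($O$ the set of outcomes). Unit-sum valuation functions: injective $u_i:M\to\mathbb R_{\ge0}$ with $\sum_{j\in M}u_i(j)=1$; $V^n$ the set of profiles. Random priority (RP) picks a uniformly random ordering of the agents and in that order gives each agent its most preferred still-unassigned item. $ar(J)=\inf_{\mathbf u\in V^n}\mathbb E[\sum_i u_i(J(\mathbf u)_i)]/\max_{\mu\in O}\sum_i u_i(\mu_i)$. *)

theory Defs
  imports Complex_Main "HOL-Combinatorics.Combinatorics"
begin

text \<open>Agents and items are both indexed by the set {..<n} (0-based, i.e. {1..n} shifted).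
  A profile is u :: nat => nat => real, u i j = value of agent i for item j.\<close>

definition unit_sum_profile :: "nat \<Rightarrow> (nat \<Rightarrow> nat \<Rightarrow> real) \<Rightarrow> bool" where
  "unit_sum_profile n u \<longleftrightarrow>
     (\<forall>i<n. inj_on (u i) {..<n} \<and> (\<forall>j<n. 0 \<le> u i j) \<and> (\<Sum>j<n. u i j) = 1)"

fun serial_dict :: "(nat \<Rightarrow> nat \<Rightarrow> real) \<Rightarrow> nat set \<Rightarrow> nat list \<Rightarrow> (nat \<Rightarrow> nat)" where
  "serial_dict u R [] = (\<lambda>i. 0)"
| "serial_dict u R (i # is) =
     (let j = (ARG_MAX (u i) j. j \<in> R) in (serial_dict u (R - {j}) is)(i := j))"

definition welfare :: "nat \<Rightarrow> (nat \<Rightarrow> nat \<Rightarrow> real) \<Rightarrow> (nat \<Rightarrow> nat) \<Rightarrow> real" where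
  "welfare n u \<mu> = (\<Sum>i<n. u i (\<mu> i))"

definition RP_welfare :: "nat \<Rightarrow> (nat \<Rightarrow> nat \<Rightarrow> real) \<Rightarrow> real" where
  "RP_welfare n u =
     (\<Sum>\<sigma>\<in>permutations_of_set {..<n}. welfare n u (serial_dict u {..<n} \<sigma>))
       / real (card (permutations_of_set {..<n}))"

definition opt_welfare :: "nat \<Rightarrow> (nat \<Rightarrow> nat \<Rightarrow> real) \<Rightarrow> real" where
  "opt_welfare n u = Max {welfare n u \<mu> | \<mu>. \<mu> permutes {..<n}}"

definition approx_ratio_RP :: "nat \<Rightarrow> real" where
  "approx_ratio_RP n = (INF u \<in> {u. unit_sum_profile n u}. RP_welfare n u / opt_welfare n u)"

end

theory Submission
  imports Defs
begin

(*
  Write T(A,S) for the welfare of the agents A summed over all orderings of A, when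
  serial dictatorship allocates the item pool S (card A = card S); RP welfare is T/n!.
  Conditioning on the first agent of the ordering gives the recursion
      T(A,S) = sum_{i in A} ((|A|-1)! u_i(fav_i S) + T(A-{i}, S-{fav_i S})),
  where fav_i S is agent i's favourite item in S.  Two lower bounds follow by induction:
   (1) an agent choosing among k remaining items gets at least its k-th smallest value;
       averaging over positions, RP welfare is at least 1 (each agent's values sum to 1);
   (2) for an optimal matching mu with welfare t, the part of mu's welfare that is still
       available drops by at most 2 per step, whence RP welfare is at least t^2/(4n).
  An elementary inequality combines (1) and (2) into t <= 2 sqrt n * (RP welfare), which
  bounds the ratio of every profile and hence the infimum by 1/(2 sqrt n).
*)

abbreviation favourite :: "(nat \<Rightarrow> nat \<Rightarrow> real) \<Rightarrow> nat \<Rightarrow> nat set \<Rightarrow> nat" where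
  "favourite u i S \<equiv> arg_max (u i) (\<lambda>j. j \<in> S)"

lemma arg_max_finite:
  fixes f :: "'a \<Rightarrow> 'b::linorder"
  assumes "finite S" "S \<noteq> {}"
  shows "arg_max f (\<lambda>j. j \<in> S) \<in> S" "\<forall>y\<in>S. f y \<le> f (arg_max f (\<lambda>j. j \<in> S))"
proof -
  have "Max (f ` S) \<in> f ` S" using assms by (intro Max_in) auto
  then obtain x where "x \<in> S" "f x = Max (f ` S)" by auto
  with assms have x: "x \<in> S" "\<forall>y\<in>S. f y \<le> f x" by auto
  have "arg_max f (\<lambda>j. j \<in> S) \<in> S \<and> (\<forall>y\<in>S. f y \<le> f (arg_max f (\<lambda>j. j \<in> S)))"
    by (rule arg_maxI[where x = x]) (use x in auto)
  then show "arg_max f (\<lambda>j. j \<in> S) \<in> S" "\<forall>y\<in>S. f y \<le> f (arg_max f (\<lambda>j. j \<in> S))"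
    by auto
qed

lemma sum_permutations_of_set_first:
  assumes "finite A" "A \<noteq> {}"
  shows "(\<Sum>\<sigma>\<in>permutations_of_set A. g \<sigma>) = (\<Sum>i\<in>A. \<Sum>xs\<in>permutations_of_set (A - {i}). g (i # xs))"
proof -
  have "(\<Sum>\<sigma>\<in>permutations_of_set A. g \<sigma>)
        = (\<Sum>\<sigma>\<in>(\<Union>i\<in>A. (#) i ` permutations_of_set (A - {i})). g \<sigma>)"
    using permutations_of_set_nonempty[OF assms(2)] by simp
  also have "\<dots> = (\<Sum>i\<in>A. \<Sum>\<sigma>\<in>(#) i ` permutations_of_set (A - {i}). g \<sigma>)"
    by (rule sum.UNION_disjoint) (use assms in auto)
  also have "\<dots> = (\<Sum>i\<in>A. \<Sum>xs\<in>permutations_of_set (A - {i}). g (i # xs))"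
    by (rule sum.cong) (auto simp: sum.reindex inj_on_def)
  finally show ?thesis .
qed

text \<open>Every element of A is missed by exactly one of the sums over A - {i}; this adds up
  the induction hypotheses over all choices of the first agent.\<close>

lemma sum_sum_remove:
  fixes X :: "'a \<Rightarrow> real"
  assumes "finite A"
  shows "(\<Sum>i\<in>A. \<Sum>i'\<in>A - {i}. X i') = real (card A - 1) * (\<Sum>i\<in>A. X i)"
proof -
  have "(\<Sum>i\<in>A. \<Sum>i'\<in>A - {i}. X i') = (\<Sum>i\<in>A. (\<Sum>i\<in>A. X i) - X i)"
    by (rule sum.cong) (use assms in \<open>auto simp: sum_diff1\<close>)
  also have "\<dots> = real (card A) * (\<Sum>i\<in>A. X i) - (\<Sum>i\<in>A. X i)"
    by (simp add: sum_subtractf)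
  also have "\<dots> = real (card A - 1) * (\<Sum>i\<in>A. X i)"
    using assms by (cases "card A") (simp_all add: algebra_simps)
  finally show ?thesis .
qed

lemma unit_sum_nonneg: "unit_sum_profile n u \<Longrightarrow> i < n \<Longrightarrow> j < n \<Longrightarrow> 0 \<le> u i j"
  by (simp add: unit_sum_profile_def)

lemma unit_sum_le_1:
  assumes "unit_sum_profile n u" "i < n" "j < n"
  shows "u i j \<le> 1"
proof -
  have "u i j \<le> (\<Sum>j<n. u i j)"
    by (rule member_le_sum) (use assms in \<open>auto simp: unit_sum_profile_def\<close>)
  then show ?thesis using assms by (simp add: unit_sum_profile_def)
qed

lemma permutes_lessThan: "\<mu> permutes {..<n} \<Longrightarrow> x < n \<Longrightarrow> \<mu> x < n"
  using permutes_in_image[of \<mu> "{..<n}" x] by simp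

section \<open>Total welfare over all orderings\<close>

definition total_sd_welfare :: "(nat \<Rightarrow> nat \<Rightarrow> real) \<Rightarrow> nat set \<Rightarrow> nat set \<Rightarrow> real" where
  "total_sd_welfare u A S = (\<Sum>\<sigma>\<in>permutations_of_set A. \<Sum>a\<in>A. u a (serial_dict u S \<sigma> a))"

lemma total_sd_welfare_empty [simp]: "total_sd_welfare u {} S = 0"
  by (simp add: total_sd_welfare_def)

lemma RP_welfare_eq: "RP_welfare n u = total_sd_welfare u {..<n} {..<n} / fact n"
  by (simp add: RP_welfare_def total_sd_welfare_def welfare_def)

text \<open>First-agent recursion: the first agent i takes its favourite item, and each of the
  (|A|-1)! orderings of the rest runs serial dictatorship on the remaining pool.\<close>

lemma total_sd_welfare_rec:
  assumes "finite A" "A \<noteq> {}"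
  shows "total_sd_welfare u A S =
    fact (card A - 1) * (\<Sum>i\<in>A. u i (favourite u i S))
    + (\<Sum>i\<in>A. total_sd_welfare u (A - {i}) (S - {favourite u i S}))"
proof -
  have first_agent: "(\<Sum>a\<in>A. u a (serial_dict u S (i # xs) a))
      = u i (favourite u i S) + (\<Sum>a\<in>A - {i}. u a (serial_dict u (S - {favourite u i S}) xs a))"
    if "i \<in> A" for i xs
  proof -
    have "(\<Sum>a\<in>A. u a (serial_dict u S (i # xs) a))
        = u i (serial_dict u S (i # xs) i) + (\<Sum>a\<in>A - {i}. u a (serial_dict u S (i # xs) a))"
      by (rule sum.remove[OF assms(1) that])
    then show ?thesis by (auto simp: Let_def intro!: sum.cong)
  qed
  have "total_sd_welfare u A S
      = (\<Sum>i\<in>A. \<Sum>xs\<in>permutations_of_set (A - {i}). \<Sum>a\<in>A. u a (serial_dict u S (i # xs) a))"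
    unfolding total_sd_welfare_def by (rule sum_permutations_of_set_first[OF assms])
  also have "\<dots> = (\<Sum>i\<in>A. \<Sum>xs\<in>permutations_of_set (A - {i}).
        u i (favourite u i S) + (\<Sum>a\<in>A - {i}. u a (serial_dict u (S - {favourite u i S}) xs a)))"
    using first_agent by (intro sum.cong refl) auto
  also have "\<dots> = (\<Sum>i\<in>A. fact (card A - 1) * u i (favourite u i S)
                         + total_sd_welfare u (A - {i}) (S - {favourite u i S}))"
    using assms by (auto simp: sum.distrib total_sd_welfare_def card_Diff_singleton intro!: sum.cong)
  finally show ?thesis by (simp add: sum.distrib sum_distrib_left)
qed

section \<open>First bound: random priority gives welfare at least 1\<close>

text \<open>Agent i's values in increasing order; since values are distinct they sum to 1.\<close>

definition sorted_values :: "(nat \<Rightarrow> nat \<Rightarrow> real) \<Rightarrow> nat \<Rightarrow> nat \<Rightarrow> real list" where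
  "sorted_values u n i = sorted_list_of_set (u i ` {..<n})"

lemma sorted_values_props:
  assumes us: "unit_sum_profile n u" and i: "i < n"
  shows "sorted (sorted_values u n i)" "distinct (sorted_values u n i)"
    "set (sorted_values u n i) = u i ` {..<n}" "length (sorted_values u n i) = n"
proof -
  have inj: "inj_on (u i) {..<n}" using us i by (simp add: unit_sum_profile_def)
  show "sorted (sorted_values u n i)" "distinct (sorted_values u n i)"
    "set (sorted_values u n i) = u i ` {..<n}"
    by (simp_all add: sorted_values_def)
  show "length (sorted_values u n i) = n"
    by (simp add: sorted_values_def card_image[OF inj])
qed

lemma sum_sorted_values:
  assumes us: "unit_sum_profile n u" and i: "i < n"
  shows "(\<Sum>l<n. sorted_values u n i ! l) = 1"
proof -
  have inj: "inj_on (u i) {..<n}" using us i by (simp add: unit_sum_profile_def)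
  have "(\<Sum>l<n. sorted_values u n i ! l) = sum_list (sorted_values u n i)"
    by (simp add: sum_list_sum_nth sorted_values_props[OF us i] atLeast0LessThan)
  also have "\<dots> = (\<Sum>j<n. u i j)"
    by (simp add: distinct_sum_list_conv_Sum sorted_values_props[OF us i] sum.reindex[OF inj])
  also have "\<dots> = 1" using us i by (simp add: unit_sum_profile_def)
  finally show ?thesis .
qed

text \<open>Among any k items, agent i values some item at least as much as its k-th smallest value
  (values are distinct, so k items cannot all lie below it).\<close>

lemma exists_value_ge_kth:
  assumes us: "unit_sum_profile n u" and i: "i < n" and S: "S \<subseteq> {..<n}"
    and k: "card S = k" "1 \<le> k"
  shows "\<exists>j\<in>S. sorted_values u n i ! (k - 1) \<le> u i j"
proof (rule ccontr)
  let ?L = "sorted_values u n i"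
  assume "\<not> ?thesis"
  then have below: "\<forall>j\<in>S. u i j < ?L ! (k - 1)" by auto
  have inj: "inj_on (u i) {..<n}" using us i by (simp add: unit_sum_profile_def)
  have "u i ` S \<subseteq> set (take (k - 1) ?L)"
  proof
    fix x assume "x \<in> u i ` S"
    then obtain j where j: "j \<in> S" "x = u i j" by auto
    then have "x \<in> set ?L" using S sorted_values_props(3)[OF us i] by auto
    then obtain r where r: "r < length ?L" "?L ! r = x" by (auto simp: in_set_conv_nth)
    have "r < k - 1"
    proof (rule ccontr)
      assume "\<not> r < k - 1"
      then have "?L ! (k - 1) \<le> ?L ! r"
        using r(1) sorted_values_props(1)[OF us i] by (intro sorted_nth_mono) auto
      then show False using below j r(2) by auto
    qed
    then show "x \<in> set (take (k - 1) ?L)" using r by (auto simp: in_set_conv_nth intro!: exI[of _ r])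
  qed
  then have "card (u i ` S) \<le> card (set (take (k - 1) ?L))" by (intro card_mono) simp_all
  also have "\<dots> \<le> k - 1" using card_length[of "take (k - 1) ?L"] by simp
  finally show False using card_image[OF inj_on_subset[OF inj S]] k by simp
qed

text \<open>Bound (1) for a sub-instance with m agents and m items: every agent gets, on average
  over its position, the mean of its m smallest values.\<close>

lemma total_sd_welfare_ge_low_values:
  assumes us: "unit_sum_profile n u"
  shows "card A = m \<Longrightarrow> A \<subseteq> {..<n} \<Longrightarrow> S \<subseteq> {..<n} \<Longrightarrow> card S = m \<Longrightarrow>
         fact (m - 1) * (\<Sum>i\<in>A. \<Sum>l<m. sorted_values u n i ! l) \<le> total_sd_welfare u A S"
proof (induction m arbitrary: A S)
  case 0
  then show ?case by (simp add: finite_subset)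
next
  case (Suc m)
  have finA: "finite A" and finS: "finite S" and Ane: "A \<noteq> {}" and Sne: "S \<noteq> {}"
    using Suc.prems finite_subset by auto
  define X where "X i = (\<Sum>l<m. sorted_values u n i ! l)" for i
  have fav_in: "favourite u i S \<in> S" and fav_max: "\<forall>y\<in>S. u i y \<le> u i (favourite u i S)" for i
    using arg_max_finite[OF finS Sne, of "u i"] by auto
  have rest: "fact (m - 1) * (\<Sum>i'\<in>A - {i}. X i') \<le> total_sd_welfare u (A - {i}) (S - {favourite u i S})"
    if "i \<in> A" for i
    unfolding X_def by (rule Suc.IH) (use Suc.prems that fav_in[of i] finA finS in auto)
  have first_pick: "sorted_values u n i ! m \<le> u i (favourite u i S)" if i: "i \<in> A" for i
  proof -
    obtain j where "j \<in> S" "sorted_values u n i ! (Suc m - 1) \<le> u i j"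
      using exists_value_ge_kth[OF us _ Suc.prems(3,4)] i Suc.prems(2) by fastforce
    then show ?thesis using fav_max[of i] by force
  qed
  have "fact m * (\<Sum>i\<in>A. sorted_values u n i ! m) + (\<Sum>i\<in>A. fact (m - 1) * (\<Sum>i'\<in>A - {i}. X i'))
        \<le> total_sd_welfare u A S"
    unfolding total_sd_welfare_rec[OF finA Ane]
    using first_pick rest Suc.prems(1) by (intro add_mono mult_left_mono sum_mono) (auto intro!: sum_mono)
  moreover have "(\<Sum>i\<in>A. fact (m - 1) * (\<Sum>i'\<in>A - {i}. X i')) = fact m * (\<Sum>i\<in>A. X i)"
    using sum_sum_remove[OF finA, of X] Suc.prems(1)
    by (cases m) (simp_all add: X_def sum_distrib_left[symmetric])
  ultimately show ?case
    by (simp add: X_def sum.distrib algebra_simps)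
qed

text \<open>For the whole instance the m smallest values are all values, which sum to 1 per agent.\<close>

lemma RP_welfare_ge_1:
  assumes us: "unit_sum_profile n u" and n: "1 \<le> n"
  shows "1 \<le> RP_welfare n u"
proof -
  have "fact (n - 1) * (\<Sum>i<n. \<Sum>l<n. sorted_values u n i ! l) \<le> total_sd_welfare u {..<n} {..<n}"
    by (rule total_sd_welfare_ge_low_values[OF us]) auto
  moreover have "(\<Sum>i<n. \<Sum>l<n. sorted_values u n i ! l) = real n"
    using sum_sorted_values[OF us] by simp
  moreover have "fact (n - 1) * real n = (fact n :: real)"
    using n by (cases n) (simp_all add: algebra_simps)
  ultimately show ?thesis by (simp add: RP_welfare_eq)
qed

section \<open>Second bound: random priority gives welfare at least OPT^2/(4n)\<close>

definition available_welfare ::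
  "(nat \<Rightarrow> nat \<Rightarrow> real) \<Rightarrow> (nat \<Rightarrow> nat) \<Rightarrow> nat set \<Rightarrow> nat set \<Rightarrow> real" where
  "available_welfare u \<mu> A S = (\<Sum>i\<in>{i\<in>A. \<mu> i \<in> S}. u i (\<mu> i))"

lemma available_welfare_all:
  assumes "\<mu> permutes {..<n}"
  shows "available_welfare u \<mu> {..<n} {..<n} = welfare n u \<mu>"
  unfolding available_welfare_def welfare_def
  using permutes_lessThan[OF assms] by (intro sum.cong) auto

lemma available_welfare_nonneg:
  assumes "unit_sum_profile n u" "\<mu> permutes {..<n}" "A \<subseteq> {..<n}"
  shows "0 \<le> available_welfare u \<mu> A S"
  unfolding available_welfare_def
  by (rule sum_nonneg) (use assms in \<open>auto intro!: unit_sum_nonneg[OF assms(1)] permutes_lessThan[OF assms(2)]\<close>)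

text \<open>Removing one agent and one item destroys at most two terms, each at most 1.\<close>

lemma available_welfare_remove:
  assumes us: "unit_sum_profile n u" and mu: "\<mu> permutes {..<n}" and A: "A \<subseteq> {..<n}"
  shows "available_welfare u \<mu> A S - 2 \<le> available_welfare u \<mu> (A - {i}) (S - {p})"
proof -
  let ?B = "{i'\<in>A. \<mu> i' \<in> S}" and ?B' = "{i'\<in>A - {i}. \<mu> i' \<in> S - {p}}"
  have fin: "finite ?B" by (rule finite_subset[of _ "{..<n}"]) (use A in auto)
  have sub: "?B' \<subseteq> ?B" by auto
  have "available_welfare u \<mu> A S = (\<Sum>i'\<in>?B'. u i' (\<mu> i')) + (\<Sum>i'\<in>?B - ?B'. u i' (\<mu> i'))"
    unfolding available_welfare_def by (subst sum.subset_diff[OF sub fin]) (rule add.commute)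
  moreover have "(\<Sum>i'\<in>?B - ?B'. u i' (\<mu> i')) \<le> real (card (?B - ?B')) * 1"
    by (rule sum_bounded_above) (use A in \<open>auto intro!: unit_sum_le_1[OF us] permutes_lessThan[OF mu]\<close>)
  moreover have "card (?B - ?B') \<le> 2"
  proof -
    have "?B - ?B' \<subseteq> {i, inv \<mu> p}"
    proof
      fix x assume "x \<in> ?B - ?B'"
      then have "x = i \<or> \<mu> x = p" by blast
      then show "x \<in> {i, inv \<mu> p}" using permutes_inverses(2)[OF mu, of x] by auto
    qed
    then have "card (?B - ?B') \<le> card {i, inv \<mu> p}" by (rule card_mono[rotated]) simp
    also have "\<dots> \<le> 2" by (simp add: card_insert_le_m1)
    finally show ?thesis .
  qed
  ultimately show ?thesis unfolding available_welfare_def by linarith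
qed

lemma available_welfare_le_favourites:
  assumes us: "unit_sum_profile n u" and A: "A \<subseteq> {..<n}" and S: "S \<subseteq> {..<n}" "S \<noteq> {}"
  shows "available_welfare u \<mu> A S \<le> (\<Sum>i\<in>A. u i (favourite u i S))"
proof -
  have finS: "finite S" using S finite_subset by blast
  note fav = arg_max_finite[OF finS S(2)]
  have "available_welfare u \<mu> A S \<le> (\<Sum>i\<in>{i\<in>A. \<mu> i \<in> S}. u i (favourite u i S))"
    unfolding available_welfare_def using fav(2) by (intro sum_mono) auto
  also have "\<dots> \<le> (\<Sum>i\<in>A. u i (favourite u i S))"
    using A S fav(1) finite_subset[OF A] by (intro sum_mono2) (auto intro!: unit_sum_nonneg[OF us])
  finally show ?thesis .
qed

text \<open>The potential step: with x the available welfare and k \<le> N agents left, the first pick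
  (worth at least x) pays for the drop of (k/N) x^2/4 to (k/N) max(0, x-2)^2/4.\<close>

lemma quadratic_potential_step:
  fixes x k N :: real
  assumes "0 \<le> x" "0 < k" "k \<le> N"
  shows "k / N * x\<^sup>2 / 4 \<le> x + k / N * (max 0 (x - 2))\<^sup>2 / 4"
proof -
  define D where "D = x\<^sup>2 / 4 - (max 0 (x - 2))\<^sup>2 / 4"
  have D: "0 \<le> D \<and> D \<le> x"
  proof (cases "x \<ge> 2")
    case True
    then show ?thesis unfolding D_def by (simp add: power2_eq_square max_def field_simps)
  next
    case False
    then have "x * x \<le> 2 * x" using assms(1) by (intro mult_right_mono) auto
    then show ?thesis unfolding D_def using False assms(1) by (simp add: max_def power2_eq_square)
  qed
  have "k / N * D \<le> 1 * D" by (rule mult_right_mono) (use assms D in auto)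
  moreover have "k / N * x\<^sup>2 / 4 - k / N * (max 0 (x - 2))\<^sup>2 / 4 = k / N * D"
    by (simp add: D_def algebra_simps)
  ultimately show ?thesis using D by linarith
qed

lemma total_sd_welfare_ge_square:
  assumes us: "unit_sum_profile n u" and mu: "\<mu> permutes {..<n}"
  shows "card A = m \<Longrightarrow> A \<subseteq> {..<n} \<Longrightarrow> S \<subseteq> {..<n} \<Longrightarrow> card S = m \<Longrightarrow>
         fact m / real n * (available_welfare u \<mu> A S)\<^sup>2 / 4 \<le> total_sd_welfare u A S"
proof (induction m arbitrary: A S)
  case 0
  then show ?case by (simp add: finite_subset available_welfare_def)
next
  case (Suc m)
  have finA: "finite A" and finS: "finite S" and Ane: "A \<noteq> {}" and Sne: "S \<noteq> {}"
    using Suc.prems finite_subset by auto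
  have mn: "Suc m \<le> n" using card_mono[OF _ Suc.prems(2)] Suc.prems(1) by simp
  define x where "x = available_welfare u \<mu> A S"
  define M where "M = max 0 (x - 2)"
  have x_nonneg: "0 \<le> x" unfolding x_def by (rule available_welfare_nonneg[OF us mu Suc.prems(2)])
  have rest: "fact m / real n * M\<^sup>2 / 4 \<le> total_sd_welfare u (A - {i}) (S - {favourite u i S})"
    if "i \<in> A" for i
  proof -
    let ?x' = "available_welfare u \<mu> (A - {i}) (S - {favourite u i S})"
    have "0 \<le> ?x'" by (rule available_welfare_nonneg[OF us mu]) (use Suc.prems in auto)
    then have "M\<^sup>2 \<le> ?x'\<^sup>2"
      using available_welfare_remove[OF us mu Suc.prems(2)]
      by (intro power_mono) (auto simp: M_def x_def)
    then have "fact m / real n * M\<^sup>2 / 4 \<le> fact m / real n * ?x'\<^sup>2 / 4"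
      by (intro divide_right_mono mult_left_mono) auto
    also have "\<dots> \<le> total_sd_welfare u (A - {i}) (S - {favourite u i S})"
      using Suc.prems that arg_max_finite(1)[OF finS Sne, of "u i"] finA finS by (intro Suc.IH) auto
    finally show ?thesis .
  qed
  have step: "real (Suc m) / real n * x\<^sup>2 / 4 \<le> x + real (Suc m) / real n * M\<^sup>2 / 4"
    unfolding M_def using mn x_nonneg by (intro quadratic_potential_step) auto
  have "fact (Suc m) / real n * x\<^sup>2 / 4 = fact m * (real (Suc m) / real n * x\<^sup>2 / 4)"
    by (simp add: algebra_simps)
  also have "\<dots> \<le> fact m * (x + real (Suc m) / real n * M\<^sup>2 / 4)"
    by (rule mult_left_mono[OF step]) simp
  also have "\<dots> = fact m * x + (\<Sum>i\<in>A. fact m / real n * M\<^sup>2 / 4)"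
    using Suc.prems(1) by (simp add: algebra_simps)
  also have "\<dots> \<le> total_sd_welfare u A S"
    unfolding total_sd_welfare_rec[OF finA Ane] x_def
    using available_welfare_le_favourites[OF us Suc.prems(2,3) Sne] rest Suc.prems(1)
    by (intro add_mono mult_left_mono sum_mono) auto
  finally show ?case unfolding x_def .
qed

section \<open>Optimal welfare\<close>

lemma opt_welfare_attained: "\<exists>\<mu>. \<mu> permutes {..<n} \<and> opt_welfare n u = welfare n u \<mu>"
  and opt_welfare_ge: "\<mu> permutes {..<n} \<Longrightarrow> welfare n u \<mu> \<le> opt_welfare n u"
proof -
  let ?W = "{welfare n u \<mu> | \<mu>. \<mu> permutes {..<n}}"
  have "?W = welfare n u ` {\<mu>. \<mu> permutes {..<n}}" by auto
  then have fin: "finite ?W" by (simp add: finite_permutations)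
  moreover have "?W \<noteq> {}" using permutes_id by blast
  ultimately have "Max ?W \<in> ?W" by (rule Max_in)
  then show "\<exists>\<mu>. \<mu> permutes {..<n} \<and> opt_welfare n u = welfare n u \<mu>"
    unfolding opt_welfare_def by auto
  show "welfare n u \<mu> \<le> opt_welfare n u" if "\<mu> permutes {..<n}"
    unfolding opt_welfare_def by (rule Max_ge[OF fin]) (use that in blast)
qed

text \<open>OPT is positive: agent 0 values some item j positively, and swapping 0 and j is a
  matching giving it that item.\<close>

lemma opt_welfare_pos:
  assumes us: "unit_sum_profile n u" and n: "1 \<le> n"
  shows "0 < opt_welfare n u"
proof -
  obtain j where j: "j < n" "0 < u 0 j"
  proof (rule ccontr)
    assume "\<not> thesis"
    then have "(\<Sum>j<n. u 0 j) \<le> 0" using that by (intro sum_nonpos) force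
    then show False using us n by (simp add: unit_sum_profile_def)
  qed
  have swap: "transpose 0 j permutes {..<n}" by (rule permutes_swap_id) (use j n in auto)
  have "u 0 j = u 0 (transpose 0 j 0)" by simp
  also have "\<dots> \<le> welfare n u (transpose 0 j)"
    unfolding welfare_def
    by (rule member_le_sum) (use n in \<open>auto intro!: unit_sum_nonneg[OF us] permutes_lessThan[OF swap]\<close>)
  also have "\<dots> \<le> opt_welfare n u" by (rule opt_welfare_ge[OF swap])
  finally show ?thesis using j by linarith
qed

section \<open>The approximation ratio\<close>

lemma combine_bounds:
  fixes t R s :: real
  assumes "0 \<le> s" "1 \<le> R" "t\<^sup>2 \<le> 4 * s\<^sup>2 * R"
  shows "t \<le> 2 * s * R"
proof (cases "t \<le> 2 * s")
  case True
  have "2 * s * 1 \<le> 2 * s * R" using assms by (intro mult_left_mono) auto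
  then show ?thesis using True by linarith
next
  case False
  have "t * t \<le> (2 * s) * (2 * s * R)"
    using assms by (simp add: power2_eq_square algebra_simps)
  also have "\<dots> \<le> t * (2 * s * R)"
    using False assms by (intro mult_right_mono) auto
  finally show ?thesis using False assms by (simp add: mult_le_cancel_right)
qed

lemma RP_ratio_bound:
  assumes us: "unit_sum_profile n u" and n: "1 \<le> n"
  shows "(1/2) / sqrt (real n) \<le> RP_welfare n u / opt_welfare n u"
proof -
  obtain \<mu> where mu: "\<mu> permutes {..<n}" and opt: "opt_welfare n u = welfare n u \<mu>"
    using opt_welfare_attained by blast
  have "available_welfare u \<mu> {..<n} {..<n} = opt_welfare n u"
    unfolding opt by (rule available_welfare_all[OF mu])
  then have "fact n / real n * (opt_welfare n u)\<^sup>2 / 4 \<le> total_sd_welfare u {..<n} {..<n}"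
    using total_sd_welfare_ge_square[OF us mu, of "{..<n}" n "{..<n}"] by simp
  then have "(opt_welfare n u)\<^sup>2 / (4 * real n) \<le> RP_welfare n u"
    by (simp add: RP_welfare_eq field_simps)
  then have "opt_welfare n u \<le> 2 * sqrt (real n) * RP_welfare n u"
    using n RP_welfare_ge_1[OF us n] by (intro combine_bounds) (auto simp: field_simps)
  then show ?thesis
    using opt_welfare_pos[OF us n] n by (simp add: field_simps)
qed

text \<open>The infimum defining the ratio ranges over a nonempty set: a linear unit-sum profile.\<close>

lemma unit_sum_profile_exists: "unit_sum_profile n (\<lambda>i j. 2 * (real j + 1) / (real n * (real n + 1)))"
proof -
  have gauss: "(\<Sum>j<n. real j + 1) = real n * (real n + 1) / 2" for n
    by (induction n) (simp_all add: field_simps)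
  show ?thesis
    unfolding unit_sum_profile_def
  proof (intro allI impI conjI)
    fix i assume i: "i < n"
    then have "real n * (real n + 1) \<noteq> 0" by simp
    then show "inj_on (\<lambda>j. 2 * (real j + 1) / (real n * (real n + 1))) {..<n}"
      by (auto simp: inj_on_def field_simps)
    show "0 \<le> 2 * (real j + 1) / (real n * (real n + 1))" for j by auto
    have "(\<Sum>j<n. 2 * (real j + 1) / (real n * (real n + 1)))
        = 2 * (\<Sum>j<n. real j + 1) / (real n * (real n + 1))"
      by (simp add: sum_divide_distrib sum_distrib_left)
    also have "\<dots> = 1" using i by (simp add: gauss)
    finally show "(\<Sum>j<n. 2 * (real j + 1) / (real n * (real n + 1))) = 1" .
  qed
qed

theorem lemma7:
  shows "\<exists>c::real > 0. \<forall>n::nat \<ge> 1. approx_ratio_RP n \<ge> c / sqrt (real n)"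
proof (intro exI[of _ "1/2"] conjI allI impI)
  fix n :: nat assume n: "1 \<le> n"
  show "(1/2) / sqrt (real n) \<le> approx_ratio_RP n"
    unfolding approx_ratio_RP_def
    by (rule cINF_greatest) (use unit_sum_profile_exists RP_ratio_bound n in auto)
qed simp

end
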